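(* Let $\mathcal{E}$ be an even Dirichlet form on $L^2(X,m)$ and let $\mathfrak{D}$ be its Dirichlet space. Assume that every $f\in\mathfrak{D}$ is quasi-continuous, and let $C>0$. Then the following are equivalent: (i) every $f\in\mathfrak{D}$ is continuous and bounded (i.e. its quasi-continuous representative is a continuous bounded function on $X$), and $\|f\|_{L^\infty(X,m)}\le C\|f\|_{\mathfrak{D}}$ for all $f\in\mathfrak{D}$; (ii) $\mathrm{Cap}(\{x\})\ge \frac1C$ for every $x\in X$.
   Context: Standing setting: $X$ is a Hausdorff topological space and $m$ is a Borel measure on $X$ with full support, i.e. no nonempty open subset of $X$ has $m$-measure zero. $L^2(X,m)$ is the real $L^2$ space. A Dirichlet form is a functional $\mathcal{E}:L^2(X,m)\to[0,\infty]$ that is convex, lower semicontinuous and densely defined (its effective domain $\mathrm{dom}(\mathcal{E})=\{u:\mathcal{E}(u)<\infty\}$ is dense in $L^2(X,m)$), and such that for all $u,v\in L^2(X,m)$ and $\alpha>0$: (1) $\mathcal{E}(u\wedge v)+\mathcal{E}(u\vee v)\le \mathcal{E}(u)+\mathcal{E}(v)$; (2) $\mathcal{E}\big(v+\tfrac12((u-v+\alpha)_+-(u-v-\alpha)_-)\big)+\mathcal{E}\big(u-\tfrac12((u-v+\alpha)_+-(u-v-\alpha)_-)\big)\le \mathcal{E}(u)+\mathcal{E}(v)$, where $(\cdot)_+$, $(\cdot)_-$ denote positive and negative parts. $\mathcal{E}$ is called even if $\mathcal{E}(0)=0$ and $\mathcal{E}(-u)=\mathcal{E}(u)$ for all $u$.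 Set $\mathcal{E}_1(u)=\|u\|_{L^2(X,m)}^2+\mathcal{E}(u)$. The Dirichlet space is $\mathfrak{D}=\{u\in L^2(X,m):\exists\lambda>0,\ \mathcal{E}_1(\lambda u)<\infty\}$ with the Minkowski norm $\|u\|_{\mathfrak{D}}=\inf\{\lambda>0:\mathcal{E}_1(u/\lambda)\le 1\}$. Capacity: for $A\subseteq X$ let $\mathcal{L}_A=\{u\in L^2(X,m): u\ge 1\ m\text{-a.e. on } U \text{ for some open } U\supseteq A\}$ and define the norm-capacity $\mathrm{Cap}(A)=\inf\{\|u\|_{\mathfrak{D}}: u\in\mathcal{L}_A\}$ (with $\|u\|_{\mathfrak{D}}=\infty$ for $u\notin\mathfrak{D}$, $\inf\emptyset=\infty$). A function $f:X\to\mathbb{R}$ is quasi-continuous if for every $\varepsilon>0$ there is an open set $O\subseteq X$ with $\mathrm{Cap}(O)\le\varepsilon$ such that $f|_{X\setminus O}$ is continuous. An element $f\in L^2(X,m)$ is called quasi-continuous if it has a quasi-continuous representative, and $f$ is then identified with that representative. *)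

theory Defs
  imports "HOL-Probability.Probability"
begin

text \<open>Elements of the real space L2(X,m) are represented by Borel measurable, square-integrable
  functions; functionals on L2 are required to respect equality m-a.e.\<close>

definition L2 :: "'a measure \<Rightarrow> ('a \<Rightarrow> real) set" where
  "L2 M = {u. u \<in> borel_measurable M \<and> integrable M (\<lambda>x. (u x)\<^sup>2)}"

definition L2norm :: "'a measure \<Rightarrow> ('a \<Rightarrow> real) \<Rightarrow> real" where
  "L2norm M u = sqrt (\<integral>x. (u x)\<^sup>2 \<partial>M)"

definition pos_part :: "real \<Rightarrow> real" where "pos_part y = max y 0"
definition neg_part :: "real \<Rightarrow> real" where "neg_part y = max (- y) 0"

definition dirichlet_form :: "'a::topological_space measure \<Rightarrow> (('a \<Rightarrow> real) \<Rightarrow> ennreal) \<Rightarrow> bool" where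
  "dirichlet_form M E \<longleftrightarrow>
     \<comment> \<open>E is a well-defined functional on L2 (respects a.e. equality)\<close>
     (\<forall>u\<in>L2 M. \<forall>v\<in>L2 M. (AE x in M. u x = v x) \<longrightarrow> E u = E v) \<and>
     \<comment> \<open>convex\<close>
     (\<forall>u\<in>L2 M. \<forall>v\<in>L2 M. \<forall>t::real. 0 \<le> t \<and> t \<le> 1 \<longrightarrow>
        E (\<lambda>x. t * u x + (1 - t) * v x) \<le> ennreal t * E u + ennreal (1 - t) * E v) \<and>
     \<comment> \<open>lower semicontinuous w.r.t. the L2 norm\<close>
     (\<forall>u us. u \<in> L2 M \<and> (\<forall>n. us n \<in> L2 M) \<and>
        (\<lambda>n. L2norm M (\<lambda>x. us n x - u x)) \<longlonglongrightarrow> 0 \<longrightarrow> E u \<le> liminf (\<lambda>n. E (us n))) \<and>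
     \<comment> \<open>densely defined\<close>
     (\<forall>u\<in>L2 M. \<forall>\<epsilon>>0. \<exists>v\<in>L2 M. E v < \<infinity> \<and> L2norm M (\<lambda>x. u x - v x) < \<epsilon>) \<and>
     \<comment> \<open>(1)\<close>
     (\<forall>u\<in>L2 M. \<forall>v\<in>L2 M. E (\<lambda>x. min (u x) (v x)) + E (\<lambda>x. max (u x) (v x)) \<le> E u + E v) \<and>
     \<comment> \<open>(2)\<close>
     (\<forall>u\<in>L2 M. \<forall>v\<in>L2 M. \<forall>\<alpha>::real. \<alpha> > 0 \<longrightarrow>
        (let w = (\<lambda>x. (1/2) * (pos_part (u x - v x + \<alpha>) - neg_part (u x - v x - \<alpha>)))
         in E (\<lambda>x. v x + w x) + E (\<lambda>x. u x - w x) \<le> E u + E v))"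

definition even_form :: "'a measure \<Rightarrow> (('a \<Rightarrow> real) \<Rightarrow> ennreal) \<Rightarrow> bool" where
  "even_form M E \<longleftrightarrow> E (\<lambda>x. 0) = 0 \<and> (\<forall>u\<in>L2 M. E (\<lambda>x. - u x) = E u)"

definition E1 :: "'a measure \<Rightarrow> (('a \<Rightarrow> real) \<Rightarrow> ennreal) \<Rightarrow> ('a \<Rightarrow> real) \<Rightarrow> ennreal" where
  "E1 M E u = ennreal ((L2norm M u)\<^sup>2) + E u"

definition dirichlet_space :: "'a measure \<Rightarrow> (('a \<Rightarrow> real) \<Rightarrow> ennreal) \<Rightarrow> ('a \<Rightarrow> real) set" where
  "dirichlet_space M E = {u \<in> L2 M. \<exists>c::real>0. E1 M E (\<lambda>x. c * u x) < \<infinity>}"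

text \<open>Minkowski norm; equals \<infinity> outside the Dirichlet space (Inf of the empty set).\<close>
definition Dnorm :: "'a measure \<Rightarrow> (('a \<Rightarrow> real) \<Rightarrow> ennreal) \<Rightarrow> ('a \<Rightarrow> real) \<Rightarrow> ereal" where
  "Dnorm M E u = Inf {ereal c | c. c > 0 \<and> E1 M E (\<lambda>x. u x / c) \<le> 1}"

definition Cap :: "'a::topological_space measure \<Rightarrow> (('a \<Rightarrow> real) \<Rightarrow> ennreal) \<Rightarrow> 'a set \<Rightarrow> ereal" where
  "Cap M E A = Inf {Dnorm M E u | u. u \<in> L2 M \<and>
      (\<exists>U. open U \<and> A \<subseteq> U \<and> (AE x in M. x \<in> U \<longrightarrow> 1 \<le> u x))}"

definition quasi_continuous :: "'a::topological_space measure \<Rightarrow> (('a \<Rightarrow> real) \<Rightarrow> ennreal) \<Rightarrow> ('a \<Rightarrow> real) \<Rightarrow> bool" where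
  "quasi_continuous M E f \<longleftrightarrow>
     (\<forall>\<epsilon>::real>0. \<exists>V. open V \<and> Cap M E V \<le> ereal \<epsilon> \<and> continuous_on (- V) f)"

definition L2_quasi_continuous :: "'a::topological_space measure \<Rightarrow> (('a \<Rightarrow> real) \<Rightarrow> ennreal) \<Rightarrow> ('a \<Rightarrow> real) \<Rightarrow> bool" where
  "L2_quasi_continuous M E f \<longleftrightarrow> (\<exists>g. quasi_continuous M E g \<and> (AE x in M. f x = g x))"

definition Linfnorm :: "'a measure \<Rightarrow> ('a \<Rightarrow> real) \<Rightarrow> ereal" where
  "Linfnorm M f = esssup M (\<lambda>x. ereal \<bar>f x\<bar>)"

end

theory Submission
  imports Defs
begin

text \<open>Assume (ii). The exceptional open set in the definition of quasi-continuity can be chosen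
  of capacity below \<open>1/C\<close>, and since every nonempty open set contains a point of capacity
  at least \<open>1/C\<close>, it is empty: quasi-continuous functions are continuous. If a continuous
  representative \<open>g\<close> of \<open>f\<close> satisfies \<open>\<bar>g x\<bar> > t > 0\<close>, then \<open>\<plusminus>f/t\<close> is at least \<open>1\<close>
  on an open neighbourhood of \<open>x\<close>, so \<open>1/C \<le> Cap {x} \<le> \<parallel>f\<parallel>\<^sub>D / t\<close>; hence
  \<open>\<bar>g\<bar> \<le> C \<parallel>f\<parallel>\<^sub>D\<close>. Conversely, by full support a function that is at least \<open>1\<close> a.e.
  near \<open>x\<close> has \<open>L\<^sup>\<infinity>\<close> norm at least \<open>1\<close>, so under (i) its Dirichlet norm is at least \<open>1/C\<close>.\<close>

lemma L2_mult_const: "u \<in> L2 M \<Longrightarrow> (\<lambda>x. a * u x) \<in> L2 M"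
  unfolding L2_def by (auto simp: power_mult_distrib)

lemma L2_divide_const: "u \<in> L2 M \<Longrightarrow> (\<lambda>x. u x / a) \<in> L2 M"
  using L2_mult_const[of u M "1/a"] by simp

lemma L2norm_mult_const: "L2norm M (\<lambda>x. a * u x) = \<bar>a\<bar> * L2norm M u"
  unfolding L2norm_def by (simp add: power_mult_distrib real_sqrt_mult)

lemma E1_uminus: "even_form M E \<Longrightarrow> u \<in> L2 M \<Longrightarrow> E1 M E (\<lambda>x. - u x) = E1 M E u"
  unfolding E1_def L2norm_def even_form_def by simp

lemma E_mult_const_le:
  assumes "dirichlet_form M E" "even_form M E" "v \<in> L2 M" "0 \<le> s" "s \<le> 1"
  shows "E (\<lambda>x. s * v x) \<le> ennreal s * E v"
proof -
  have convex: "\<forall>u\<in>L2 M. \<forall>v\<in>L2 M. \<forall>t::real. 0 \<le> t \<and> t \<le> 1 \<longrightarrow>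
      E (\<lambda>x. t * u x + (1 - t) * v x) \<le> ennreal t * E u + ennreal (1 - t) * E v"
    using assms(1) unfolding dirichlet_form_def by blast
  have zero: "(\<lambda>x. 0::real) \<in> L2 M" unfolding L2_def by simp
  have "E (\<lambda>x. s * v x + (1 - s) * 0) \<le> ennreal s * E v + ennreal (1 - s) * E (\<lambda>x. 0)"
    using convex[rule_format, OF assms(3) zero, of s] assms(4,5) by simp
  then show ?thesis using assms(2) unfolding even_form_def by simp
qed

lemma Dnorm_nonneg: "0 \<le> Dnorm M E u"
  unfolding Dnorm_def by (auto intro!: Inf_greatest)

lemma Dnorm_le: "0 < c \<Longrightarrow> E1 M E (\<lambda>x. u x / c) \<le> 1 \<Longrightarrow> Dnorm M E u \<le> ereal c"
  unfolding Dnorm_def by (auto intro!: Inf_lower)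

lemma le_mult_DnormI:
  assumes C: "0 < C" and le: "\<And>c. 0 < c \<Longrightarrow> E1 M E (\<lambda>x. u x / c) \<le> 1 \<Longrightarrow> a \<le> ereal (C * c)"
  shows "a \<le> ereal C * Dnorm M E u"
proof -
  have "ereal (1 / C) * a \<le> Dnorm M E u"
    unfolding Dnorm_def
  proof (rule Inf_greatest, clarify)
    fix c assume "0 < c" "E1 M E (\<lambda>x. u x / c) \<le> 1"
    then have "ereal (1 / C) * a \<le> ereal (1 / C) * ereal (C * c)"
      using C le by (intro ereal_mult_left_mono) auto
    then show "ereal (1 / C) * a \<le> ereal c" using C by simp
  qed
  then have "ereal C * (ereal (1 / C) * a) \<le> ereal C * Dnorm M E u"
    using C by (intro ereal_mult_left_mono) auto
  then show ?thesis using C by (simp add: mult.assoc[symmetric])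
qed

lemma dirichlet_space_if_Dnorm_less_top:
  assumes u: "u \<in> L2 M" and fin: "Dnorm M E u < \<infinity>"
  shows "u \<in> dirichlet_space M E"
proof -
  have "{ereal c | c. 0 < c \<and> E1 M E (\<lambda>x. u x / c) \<le> 1} \<noteq> {}"
    using fin unfolding Dnorm_def by (metis Inf_empty less_irrefl top_ereal_def)
  then obtain c where c: "0 < c" "E1 M E (\<lambda>x. u x / c) \<le> 1" by blast
  have "(\<lambda>x. (1 / c) * u x) = (\<lambda>x. u x / c)" by auto
  moreover have "E1 M E (\<lambda>x. u x / c) < \<infinity>"
    using le_less_trans[OF c(2) ennreal_one_less_top] by (simp add: infinity_ennreal_def)
  ultimately show ?thesis unfolding dirichlet_space_def using u c by (auto intro!: exI[of _ "1 / c"])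
qed

text \<open>Membership in the Dirichlet space only asks for \<open>E1 (c f) < \<infinity>\<close>; convexity together with
  \<open>E 0 = 0\<close> lets us shrink \<open>c\<close> until \<open>E1 (c f) \<le> 1\<close>.\<close>

lemma dirichlet_space_imp_E1_le_one:
  assumes dform: "dirichlet_form M E" and even: "even_form M E" and f: "f \<in> dirichlet_space M E"
  shows "\<exists>c>0. E1 M E (\<lambda>x. f x / c) \<le> 1"
proof -
  obtain c0 where c0: "0 < c0" "E1 M E (\<lambda>x. c0 * f x) < \<infinity>" and fL: "f \<in> L2 M"
    using f unfolding dirichlet_space_def by auto
  define v where "v = (\<lambda>x. c0 * f x)"
  have vL: "v \<in> L2 M" unfolding v_def using L2_mult_const[OF fL] .
  define A where "A = enn2real (E v)"
  define K where "K = (L2norm M v)\<^sup>2"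
  have EA: "E v = ennreal A"
    using c0(2) unfolding A_def E1_def v_def by (simp add: less_top ennreal_enn2real)
  have A0: "0 \<le> A" and K0: "0 \<le> K" unfolding A_def K_def by simp_all
  define s where "s = 1 / (2 * (A + K + 1))"
  have s: "0 < s" "s \<le> 1" "s * (A + K) \<le> 1/2"
    unfolding s_def using A0 K0 by (simp_all add: field_simps)
  have scale: "(\<lambda>x. f x / (1 / (s * c0))) = (\<lambda>x. s * v x)"
    unfolding v_def using s c0 by (auto simp: field_simps)
  have "s\<^sup>2 * K \<le> s * K"
    using s K0 by (intro mult_right_mono) (auto simp: power2_eq_square)
  then have sum: "s\<^sup>2 * K + s * A \<le> 1" using s(3) by (simp add: distrib_left)
  have "E1 M E (\<lambda>x. s * v x) = ennreal (s\<^sup>2 * K) + E (\<lambda>x. s * v x)"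
    unfolding E1_def L2norm_mult_const K_def using s by (simp add: power_mult_distrib)
  also have "\<dots> \<le> ennreal (s\<^sup>2 * K) + ennreal (s * A)"
    using E_mult_const_le[OF dform even vL, of s] s A0 by (simp add: EA ennreal_mult add_left_mono)
  also have "\<dots> \<le> 1"
    using sum s A0 K0 by (simp add: ennreal_plus[symmetric] del: ennreal_plus)
  finally show ?thesis using s c0 unfolding scale[symmetric] by (intro exI[of _ "1 / (s * c0)"]) auto
qed

lemma Cap_le_Dnorm:
  "u \<in> L2 M \<Longrightarrow> open U \<Longrightarrow> A \<subseteq> U \<Longrightarrow> (AE x in M. x \<in> U \<longrightarrow> 1 \<le> u x)
    \<Longrightarrow> Cap M E A \<le> Dnorm M E u"
  unfolding Cap_def by (rule Inf_lower) blast

lemma Cap_mono: "A \<subseteq> B \<Longrightarrow> Cap M E A \<le> Cap M E B"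
  unfolding Cap_def by (rule Inf_superset_mono) blast

lemma Linfnorm_le:
  "f \<in> borel_measurable M \<Longrightarrow> (AE x in M. \<bar>f x\<bar> \<le> b) \<Longrightarrow> Linfnorm M f \<le> ereal b"
  unfolding Linfnorm_def by (rule esssup_I) auto

lemma one_le_Linfnorm:
  assumes borel: "sets M = sets borel"
    and full_support: "\<And>U. open U \<Longrightarrow> U \<noteq> {} \<Longrightarrow> emeasure M U \<noteq> 0"
    and U: "open U" "U \<noteq> {}" and ge: "AE x in M. x \<in> U \<longrightarrow> 1 \<le> u x"
  shows "1 \<le> Linfnorm M u"
proof (rule ccontr)
  assume "\<not> 1 \<le> Linfnorm M u"
  then have less: "Linfnorm M u < 1" by simp
  have "AE x in M. ereal \<bar>u x\<bar> \<le> Linfnorm M u"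
    unfolding Linfnorm_def by (rule esssup_AE)
  then have "AE x in M. \<bar>u x\<bar> < 1"
  proof (rule eventually_mono)
    fix x assume "ereal \<bar>u x\<bar> \<le> Linfnorm M u"
    with less have "ereal \<bar>u x\<bar> < 1" by order
    then show "\<bar>u x\<bar> < 1" by simp
  qed
  with ge have "AE x in M. x \<notin> U" by eventually_elim auto
  then have "emeasure M U = 0"
    using emeasure_eq_0_AE[of "\<lambda>x. x \<in> U" M] sets_eq_imp_space_eq[OF borel] by simp
  with full_support U show False by blast
qed

lemma Cap_singleton_ge_if_Linfnorm_le_Dnorm:
  assumes borel: "sets M = sets borel"
    and full_support: "\<And>U. open U \<Longrightarrow> U \<noteq> {} \<Longrightarrow> emeasure M U \<noteq> 0"
    and C: "0 < C" and bound: "\<forall>f\<in>dirichlet_space M E. Linfnorm M f \<le> ereal C * Dnorm M E f"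
  shows "ereal (1 / C) \<le> Cap M E {x}"
  unfolding Cap_def
proof (rule Inf_greatest, clarify)
  fix u U assume u: "u \<in> L2 M" and U: "open U" "{x} \<subseteq> U" and ge: "AE y in M. y \<in> U \<longrightarrow> 1 \<le> u y"
  show "ereal (1 / C) \<le> Dnorm M E u"
  proof (cases "Dnorm M E u")
    case (real d)
    then have "u \<in> dirichlet_space M E" using dirichlet_space_if_Dnorm_less_top[OF u] by simp
    then have "1 \<le> ereal C * Dnorm M E u"
      using one_le_Linfnorm[OF borel full_support U(1) _ ge] U(2) bound by force
    then show ?thesis using real C by (simp add: field_simps)
  qed (use Dnorm_nonneg[of M E u] in auto)
qed

lemma continuous_if_quasi_continuous:
  assumes \<delta>: "0 < \<delta>" and cap: "\<forall>x. ereal \<delta> \<le> Cap M E {x}" and g: "quasi_continuous M E g"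
  shows "continuous_on UNIV g"
proof -
  obtain V where V: "Cap M E V \<le> ereal (\<delta> / 2)" "continuous_on (- V) g"
    using g \<delta> unfolding quasi_continuous_def by (meson half_gt_zero)
  have "V = {}"
  proof (rule ccontr)
    assume "V \<noteq> {}"
    then obtain x where "{x} \<subseteq> V" by blast
    then have "ereal \<delta> \<le> ereal (\<delta> / 2)" using cap Cap_mono V(1) by (meson order_trans)
    with \<delta> show False by simp
  qed
  with V(2) show ?thesis by simp
qed

text \<open>The test function is \<open>\<plusminus>f/t\<close>, the sign being that of \<open>g x\<close>; evenness of \<open>E\<close> makes the sign
  irrelevant for the Dirichlet norm.\<close>

lemma Cap_singleton_le_divide:
  assumes even: "even_form M E" and f: "f \<in> L2 M"
    and g: "continuous_on UNIV g" and ae: "AE y in M. f y = g y"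
    and t: "0 < t" "t < \<bar>g x\<bar>" and c: "0 < c" "E1 M E (\<lambda>y. f y / c) \<le> 1"
  shows "Cap M E {x} \<le> ereal (c / t)"
proof -
  define \<sigma> where "\<sigma> = sgn (g x)"
  have \<sigma>: "\<sigma> = 1 \<or> \<sigma> = -1" "\<sigma> * g x = \<bar>g x\<bar>"
    using t unfolding \<sigma>_def by (auto simp: sgn_if)
  define u where "u = (\<lambda>y. \<sigma> * f y / t)"
  define U where "U = {y. 1 < \<sigma> * g y / t}"
  have uL: "u \<in> L2 M" unfolding u_def using L2_divide_const[OF L2_mult_const[OF f]] .
  have U: "open U" unfolding U_def by (intro open_Collect_less continuous_intros g) (use t in auto)
  have xU: "x \<in> U" unfolding U_def using \<sigma>(2) t by simp
  have ge: "AE y in M. y \<in> U \<longrightarrow> 1 \<le> u y"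
    using ae by eventually_elim (auto simp: U_def u_def)
  have "(\<lambda>y. u y / (c / t)) = (\<lambda>y. \<sigma> * (f y / c))"
    unfolding u_def using t by simp
  moreover have "E1 M E (\<lambda>y. \<sigma> * (f y / c)) = E1 M E (\<lambda>y. f y / c)"
    using \<sigma>(1) E1_uminus[OF even L2_divide_const[OF f]] by auto
  ultimately have E1_le: "E1 M E (\<lambda>y. u y / (c / t)) \<le> 1" using c(2) by simp
  have "Cap M E {x} \<le> Dnorm M E u" using Cap_le_Dnorm[OF uL U _ ge] xU by simp
  also have "\<dots> \<le> ereal (c / t)" using E1_le c t by (intro Dnorm_le) auto
  finally show ?thesis .
qed

lemma abs_le_if_Cap_singleton_ge:
  assumes even: "even_form M E" and f: "f \<in> L2 M"
    and g: "continuous_on UNIV g" and ae: "AE y in M. f y = g y"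
    and C: "0 < C" and cap: "ereal (1 / C) \<le> Cap M E {x}"
    and c: "0 < c" "E1 M E (\<lambda>y. f y / c) \<le> 1"
  shows "\<bar>g x\<bar> \<le> C * c"
proof (cases "g x = 0")
  case False
  show ?thesis
  proof (rule dense_le_bounded[of 0])
    fix t assume t: "0 < t" "t < \<bar>g x\<bar>"
    have "ereal (1 / C) \<le> ereal (c / t)"
      using cap Cap_singleton_le_divide[OF even f g ae t c] by order
    then show "t \<le> C * c" using C t by (simp add: field_simps)
  qed (use False in simp)
qed (use C c in simp)

lemma continuous_bounded_representative_if_Cap_singleton_ge:
  assumes dform: "dirichlet_form M E" and even: "even_form M E"
    and f: "f \<in> dirichlet_space M E" and qc: "L2_quasi_continuous M E f"
    and C: "0 < C" and cap: "\<forall>x. ereal (1 / C) \<le> Cap M E {x}"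
  shows "(\<exists>g. continuous_on UNIV g \<and> bounded (range g) \<and> (AE x in M. f x = g x))
    \<and> Linfnorm M f \<le> ereal C * Dnorm M E f"
proof -
  have fL: "f \<in> L2 M" using f unfolding dirichlet_space_def by auto
  obtain g where "quasi_continuous M E g" and ae: "AE x in M. f x = g x"
    using qc unfolding L2_quasi_continuous_def by blast
  then have g: "continuous_on UNIV g"
    using C cap by (intro continuous_if_quasi_continuous[of "1 / C"]) auto
  note bound = abs_le_if_Cap_singleton_ge[OF even fL g ae C cap[rule_format]]
  obtain c0 where "0 < c0" "E1 M E (\<lambda>x. f x / c0) \<le> 1"
    using dirichlet_space_imp_E1_le_one[OF dform even f] by blast
  then have "bounded (range g)" unfolding bounded_real using bound by blast
  moreover have "Linfnorm M f \<le> ereal C * Dnorm M E f"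
    using C proof (rule le_mult_DnormI)
    fix c assume "0 < c" "E1 M E (\<lambda>x. f x / c) \<le> 1"
    then show "Linfnorm M f \<le> ereal (C * c)"
      using fL ae bound unfolding L2_def by (intro Linfnorm_le) (auto elim: AE_mp)
  qed
  ultimately show ?thesis using g ae by blast
qed

theorem mainTheorem3:
  fixes M :: "'a::t2_space measure" and E :: "('a \<Rightarrow> real) \<Rightarrow> ennreal" and C :: real
  assumes borel: "sets M = sets borel"
    and full_support: "\<And>U. open U \<Longrightarrow> U \<noteq> {} \<Longrightarrow> emeasure M U \<noteq> 0"
    and dform: "dirichlet_form M E"
    and even: "even_form M E"
    and qc: "\<And>f. f \<in> dirichlet_space M E \<Longrightarrow> L2_quasi_continuous M E f"
    and Cpos: "C > 0"
  shows "((\<forall>f\<in>dirichlet_space M E.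
             (\<exists>g. continuous_on UNIV g \<and> bounded (range g) \<and> (AE x in M. f x = g x)))
          \<and> (\<forall>f\<in>dirichlet_space M E. Linfnorm M f \<le> ereal C * Dnorm M E f))
         \<longleftrightarrow> (\<forall>x. Cap M E {x} \<ge> ereal (1 / C))"
    (is "?continuous_bounded \<and> ?sup_bound \<longleftrightarrow> ?capacity")
proof
  assume "?continuous_bounded \<and> ?sup_bound"
  then show ?capacity
    using Cap_singleton_ge_if_Linfnorm_le_Dnorm[OF borel full_support Cpos] by blast
next
  assume ?capacity
  then show "?continuous_bounded \<and> ?sup_bound"
    using continuous_bounded_representative_if_Cap_singleton_ge[OF dform even _ qc Cpos] by blast
qed

end
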